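(* Let $T_1,T_2,\dots$ be independent random variables with $T_i\sim\mathrm{Geometric}(p_i)$, $p_i=(n-i+1)/n$ (i.e. $P(T_i=k)=p_i(1-p_i)^{k-1}$ for $k\ge1$). For any $u>0$ and $\eta\in(0,u)$ there are positive constants $\Delta_2$ and $\beta=\beta(u,\eta)$ such that for all large enough $n$ and all $m<\beta n$, $$P\left(T_1+T_2+\cdots+T_{\lfloor(u-\eta)m\rfloor}>um\right)\le\exp\big[-\eta m\log(n/m)+\Delta_2 m\big].$$ Moreover, $\beta(u,\eta)\downarrow0$ as $\eta\downarrow0$, and for fixed $\eta$, $\beta(u,\eta)$ is a decreasing function of $u$. *)

theory Defs
  imports "HOL-Probability.Probability"
begin

text \<open>Geometric distribution on {1,2,...}: P(T = k) = p (1-p)^(k-1) for k \<ge> 1.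
  The library's geometric_pmf counts failures (support from 0), so shift by one.\<close>
definition geom1_pmf :: "real \<Rightarrow> nat pmf" where
  "geom1_pmf p = map_pmf Suc (geometric_pmf p)"

definition coupon_p :: "nat \<Rightarrow> nat \<Rightarrow> real" where
  "coupon_p n i = (real n - real i + 1) / real n"

definition sumT_pmf :: "nat \<Rightarrow> nat \<Rightarrow> nat pmf" where
  "sumT_pmf n k = map_pmf (\<lambda>T. \<Sum>i\<in>{1..k}. T i)
                          (Pi_pmf {1..k} 0 (\<lambda>i. geom1_pmf (coupon_p n i)))"

end

theory Submission imports Defs begin

text \<open>Chernoff bound with the generating function of \<open>S = T\<^sub>1 + \<dots> + T\<^sub>k\<close> evaluated at
  \<open>z = n / (2k)\<close>.  For \<open>i \<le> k\<close> we have \<open>(1 - p\<^sub>i) z \<le> 1/2\<close>, so \<open>E z^T\<^sub>i \<le> 2z\<close> and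
  \<open>P(S > um) \<le> (2z)^k / z^(um)\<close>.  Since \<open>k \<le> (u - \<eta>) m\<close>, the exponent of \<open>z\<close> is at
  least \<open>\<eta> m\<close>, and \<open>z \<ge> n / (2um)\<close> turns \<open>z^(-\<eta>m)\<close> into \<open>exp(-\<eta> m log(n/m) + O(m))\<close>.
  Taking \<open>\<beta>(u,\<eta>) = \<eta> / (2u\<^sup>2)\<close> guarantees \<open>2k < n\<close>, hence \<open>z > 1\<close>.\<close>

lemma nn_integral_geom1_pmf_power:
  fixes p z :: real
  assumes "0 < p" "p \<le> 1" "0 \<le> z" "(1 - p) * z < 1"
  shows "(\<integral>\<^sup>+x. ennreal (z ^ x) \<partial>geom1_pmf p) = ennreal (p * z / (1 - (1 - p) * z))"
proof -
  have "(\<integral>\<^sup>+x. ennreal (z ^ x) \<partial>geom1_pmf p) = (\<integral>\<^sup>+j. ennreal (z ^ Suc j) \<partial>geometric_pmf p)"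
    by (simp add: geom1_pmf_def)
  also have "\<dots> = (\<integral>\<^sup>+j. ennreal (pmf (geometric_pmf p) j) * ennreal (z ^ Suc j) \<partial>count_space UNIV)"
    by (rule nn_integral_measure_pmf)
  also have "\<dots> = (\<Sum>j. ennreal (p * z * ((1 - p) * z) ^ j))"
    using assms by (simp add: nn_integral_count_space_nat ennreal_mult''[symmetric]
        power_mult_distrib mult_ac)
  also have "\<dots> = ennreal (p * z * (1 / (1 - (1 - p) * z)))"
    using assms by (intro suminf_ennreal_eq sums_mult geometric_sums) auto
  finally show ?thesis by simp
qed

lemma nn_integral_geom1_pmf_power_le:
  fixes p z :: real
  assumes "0 < p" "p \<le> 1" "0 \<le> z" "(1 - p) * z \<le> 1/2"
  shows "(\<integral>\<^sup>+x. ennreal (z ^ x) \<partial>geom1_pmf p) \<le> ennreal (2 * z)"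
proof -
  have "p * z / (1 - (1 - p) * z) \<le> p * z / (1/2)"
    using assms by (intro divide_left_mono) auto
  also have "\<dots> \<le> 2 * z"
    using assms mult_left_le_one_le[of z p] by simp
  finally show ?thesis
    using assms by (simp add: nn_integral_geom1_pmf_power ennreal_leI)
qed

lemma nn_integral_sumT_pmf_power:
  fixes z :: real
  assumes "0 \<le> z"
  shows "(\<integral>\<^sup>+s. ennreal (z ^ s) \<partial>sumT_pmf n k)
       = (\<Prod>i\<in>{1..k}. \<integral>\<^sup>+x. ennreal (z ^ x) \<partial>geom1_pmf (coupon_p n i))"
proof -
  have "(\<integral>\<^sup>+s. ennreal (z ^ s) \<partial>sumT_pmf n k)
      = (\<integral>\<^sup>+T. (\<Prod>i\<in>{1..k}. ennreal (z ^ T i)) \<partial>Pi_pmf {1..k} 0 (\<lambda>i. geom1_pmf (coupon_p n i)))"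
    using assms by (simp add: sumT_pmf_def power_sum prod_ennreal)
  also have "\<dots> = (\<Prod>i\<in>{1..k}. \<integral>\<^sup>+x. ennreal (z ^ x) \<partial>geom1_pmf (coupon_p n i))"
    by (rule nn_integral_prod_Pi_pmf) simp
  finally show ?thesis .
qed

lemma nn_integral_sumT_pmf_power_le:
  fixes n k :: nat
  assumes "1 \<le> k" "k \<le> n"
  defines "z \<equiv> real n / (2 * real k)"
  shows "(\<integral>\<^sup>+s. ennreal (z ^ s) \<partial>sumT_pmf n k) \<le> ennreal ((2 * z) ^ k)"
proof -
  have z: "0 \<le> z" by (simp add: z_def)
  have "(\<Prod>i\<in>{1..k}. \<integral>\<^sup>+x. ennreal (z ^ x) \<partial>geom1_pmf (coupon_p n i))
      \<le> (\<Prod>i\<in>{1..k}. ennreal (2 * z))"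
  proof (rule prod_mono_ennreal)
    fix i assume i: "i \<in> {1..k}"
    have n: "0 < real n" using assms by simp
    have "0 < coupon_p n i" "coupon_p n i \<le> 1"
      using i assms n by (auto simp: coupon_p_def field_simps)
    moreover have "(1 - coupon_p n i) * z = (real i - 1) / (2 * real k)"
      using n assms by (simp add: coupon_p_def z_def field_simps)
    moreover have "(real i - 1) / (2 * real k) \<le> 1/2"
      using i by (simp add: field_simps)
    ultimately show "(\<integral>\<^sup>+x. ennreal (z ^ x) \<partial>geom1_pmf (coupon_p n i)) \<le> ennreal (2 * z)"
      using z by (intro nn_integral_geom1_pmf_power_le) auto
  qed
  then show ?thesis
    using z by (simp add: nn_integral_sumT_pmf_power ennreal_power)
qed

lemma emeasure_greater_le_generating_function:
  fixes M :: "nat pmf" and z t :: real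
  assumes "1 < z"
  shows "emeasure M {s. real s > t} \<le> (\<integral>\<^sup>+s. ennreal (z ^ s) \<partial>M) * ennreal (1 / z powr t)"
proof -
  have "indicator {s. real s > t} s \<le> ennreal (z ^ s) * ennreal (1 / z powr t)" for s :: nat
  proof (cases "real s > t")
    case True
    have "z powr t \<le> z powr real s"
      using assms True by (intro powr_mono) auto
    then have "1 \<le> z ^ s * (1 / z powr t)"
      using assms by (simp add: powr_realpow le_divide_eq)
    then show ?thesis
      using True assms by (simp add: ennreal_mult[symmetric] ennreal_leI flip: ennreal_1)
  qed simp
  then have "emeasure M {s. real s > t} \<le> (\<integral>\<^sup>+s. ennreal (z ^ s) * ennreal (1 / z powr t) \<partial>M)"
    by (simp add: nn_integral_mono flip: nn_integral_indicator)
  also have "\<dots> = (\<integral>\<^sup>+s. ennreal (z ^ s) \<partial>M) * ennreal (1 / z powr t)"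
    by (rule nn_integral_multc) simp
  finally show ?thesis .
qed

lemma prob_sumT_pmf_greater_le:
  fixes n k :: nat and t :: real
  assumes "1 \<le> k" "2 * k < n"
  defines "z \<equiv> real n / (2 * real k)"
  shows "measure_pmf.prob (sumT_pmf n k) {s. real s > t} \<le> (2 * z) ^ k / z powr t"
proof -
  have z: "1 < z"
    using assms by (simp add: z_def less_divide_eq flip: of_nat_less_iff)
  have "emeasure (sumT_pmf n k) {s. real s > t}
      \<le> (\<integral>\<^sup>+s. ennreal (z ^ s) \<partial>sumT_pmf n k) * ennreal (1 / z powr t)"
    using z by (rule emeasure_greater_le_generating_function)
  also have "\<dots> \<le> ennreal ((2 * z) ^ k) * ennreal (1 / z powr t)"
    using assms unfolding z_def by (intro mult_right_mono nn_integral_sumT_pmf_power_le) auto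
  finally have "emeasure (sumT_pmf n k) {s. real s > t} \<le> ennreal ((2 * z) ^ k) * ennreal (1 / z powr t)" .
  then show ?thesis
    using z by (simp add: measure_pmf.emeasure_eq_measure ennreal_mult''[symmetric] ennreal_le_iff)
qed

lemma ln_div_sub_ln_le:
  fixes n m k u :: real
  assumes "0 < n" "0 < k" "0 < u" "k \<le> u * m"
  shows "ln (n / m) - ln (2 * u) \<le> ln (n / (2 * k))"
proof -
  have "0 < u * m"
    using assms by linarith
  then have m: "0 < m"
    using assms zero_less_mult_pos by blast
  have "ln (2 * k) \<le> ln (2 * u * m)"
    using assms m by (subst ln_le_cancel_iff) auto
  then show ?thesis
    using assms m by (simp add: ln_div ln_mult)
qed

lemma chernoff_bound_le_exp:
  fixes u \<eta> :: real and n m k :: nat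
  assumes "0 < \<eta>" "\<eta> < u" "1 \<le> k" "2 * k < n" "real k \<le> (u - \<eta>) * real m"
  defines "z \<equiv> real n / (2 * real k)"
  shows "(2 * z) ^ k / z powr (u * real m)
     \<le> exp (- \<eta> * real m * ln (real n / real m) + (u * ln 2 + \<eta> * \<bar>ln (2 * u)\<bar>) * real m)"
proof -
  have z: "1 < z"
    using assms by (simp add: z_def less_divide_eq flip: of_nat_less_iff)
  have gap: "\<eta> * real m \<le> u * real m - real k"
    using assms by (simp add: algebra_simps)
  moreover have "0 \<le> \<eta> * real m"
    using assms by simp
  ultimately have k_le: "real k \<le> u * real m"
    by linarith
  have ln_z: "ln (real n / real m) - ln (2 * u) \<le> ln z"
    unfolding z_def using assms k_le by (intro ln_div_sub_ln_le) auto
  have "(2 * z) ^ k / z powr (u * real m) = exp (real k * ln 2 - (u * real m - real k) * ln z)"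
    using z by (simp add: powr_def ln_realpow ln_mult exp_diff exp_add algebra_simps flip: powr_realpow)
  also have "\<dots> \<le> exp (u * real m * ln 2 - \<eta> * real m * (ln (real n / real m) - ln (2 * u)))"
  proof -
    have "real k * ln 2 \<le> u * real m * ln 2"
      using k_le by (intro mult_right_mono) auto
    moreover have "\<eta> * real m * (ln (real n / real m) - ln (2 * u)) \<le> \<eta> * real m * ln z"
      using assms ln_z by (intro mult_left_mono) auto
    moreover have "\<eta> * real m * ln z \<le> (u * real m - real k) * ln z"
      using z gap by (intro mult_right_mono) auto
    ultimately show ?thesis
      by (subst exp_le_cancel_iff) linarith
  qed
  also have "\<dots> \<le> exp (- \<eta> * real m * ln (real n / real m) + (u * ln 2 + \<eta> * \<bar>ln (2 * u)\<bar>) * real m)"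
    using assms by (simp add: algebra_simps mult_left_mono)
  finally show ?thesis .
qed

lemma prob_sumT_pmf_greater_le_exp:
  fixes u \<eta> :: real and n m :: nat
  assumes "0 < \<eta>" "\<eta> < u" "real m < \<eta> / (2 * u * u) * real n"
  shows "measure_pmf.prob (sumT_pmf n (nat \<lfloor>(u - \<eta>) * real m\<rfloor>)) {s. real s > u * real m}
     \<le> exp (- \<eta> * real m * ln (real n / real m) + (u * ln 2 + \<eta> * \<bar>ln (2 * u)\<bar>) * real m)"
proof (cases "nat \<lfloor>(u - \<eta>) * real m\<rfloor> = 0")
  case True
  moreover have "0 \<le> u * real m"
    using assms by simp
  ultimately show ?thesis
    by (simp add: sumT_pmf_def measure_return)
next
  case False
  define k where "k = nat \<lfloor>(u - \<eta>) * real m\<rfloor>"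
  have "k \<noteq> 0"
    unfolding k_def by (fact False)
  then have "int k = \<lfloor>(u - \<eta>) * real m\<rfloor>"
    by (auto simp: k_def)
  then have k: "1 \<le> k" "real k \<le> (u - \<eta>) * real m"
    using \<open>k \<noteq> 0\<close> by (simp, metis of_int_floor_le of_int_of_nat_eq)
  have "real k \<le> u * real m"
    using k assms by (smt (verit) mult_right_mono of_nat_0_le_iff)
  also have "\<dots> < u * (\<eta> / (2 * u * u) * real n)"
    using assms by (intro mult_strict_left_mono) auto
  also have "\<dots> = \<eta> / u * real n / 2"
    using assms by (simp add: field_simps)
  also have "\<dots> \<le> real n / 2"
    using assms by (intro divide_right_mono mult_left_le_one_le) auto
  finally have "2 * k < n"
    by linarith
  with k have "measure_pmf.prob (sumT_pmf n k) {s. real s > u * real m}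
     \<le> exp (- \<eta> * real m * ln (real n / real m) + (u * ln 2 + \<eta> * \<bar>ln (2 * u)\<bar>) * real m)"
    using assms by (intro order_trans[OF prob_sumT_pmf_greater_le chernoff_bound_le_exp]) auto
  then show ?thesis
    by (simp add: k_def)
qed

theorem lemma3:
  shows "\<exists>\<beta> :: real \<Rightarrow> real \<Rightarrow> real.
    (\<forall>u \<eta>. 0 < u \<and> 0 < \<eta> \<and> \<eta> < u \<longrightarrow>
       0 < \<beta> u \<eta> \<and>
       (\<exists>\<Delta>\<^sub>2 > 0. \<forall>\<^sub>F n in sequentially. \<forall>m :: nat. real m < \<beta> u \<eta> * real n \<longrightarrow>
          measure_pmf.prob (sumT_pmf n (nat \<lfloor>(u - \<eta>) * real m\<rfloor>)) {s. real s > u * real m}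
            \<le> exp (- \<eta> * real m * ln (real n / real m) + \<Delta>\<^sub>2 * real m))) \<and>
    (\<forall>u > 0. ((\<beta> u) \<longlongrightarrow> 0) (at_right 0) \<and>
       (\<forall>\<eta>1 \<eta>2. 0 < \<eta>1 \<and> \<eta>1 \<le> \<eta>2 \<and> \<eta>2 < u \<longrightarrow> \<beta> u \<eta>1 \<le> \<beta> u \<eta>2)) \<and>
    (\<forall>\<eta> > 0. \<forall>u1 u2. \<eta> < u1 \<and> u1 \<le> u2 \<longrightarrow> \<beta> u2 \<eta> \<le> \<beta> u1 \<eta>)"
proof (intro exI[of _ "\<lambda>u \<eta>. \<eta> / (2 * u * u)"] conjI allI impI)
  fix u \<eta> :: real
  assume "0 < u \<and> 0 < \<eta> \<and> \<eta> < u"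
  then have u: "0 < u" and \<eta>: "0 < \<eta>" "\<eta> < u" by auto
  then show "0 < \<eta> / (2 * u * u)" by simp
  define \<Delta> where "\<Delta> = u * ln 2 + \<eta> * \<bar>ln (2 * u)\<bar> + 1"
  have "exp (- \<eta> * real m * ln (real n / real m) + (u * ln 2 + \<eta> * \<bar>ln (2 * u)\<bar>) * real m)
      \<le> exp (- \<eta> * real m * ln (real n / real m) + \<Delta> * real m)" for n m :: nat
    by (simp add: \<Delta>_def algebra_simps)
  moreover have "0 < \<Delta>"
    using u \<eta> by (simp add: \<Delta>_def add_nonneg_pos)
  ultimately show "\<exists>\<Delta>\<^sub>2 > 0. \<forall>\<^sub>F n in sequentially. \<forall>m :: nat. real m < \<eta> / (2 * u * u) * real n \<longrightarrow>
      measure_pmf.prob (sumT_pmf n (nat \<lfloor>(u - \<eta>) * real m\<rfloor>)) {s. real s > u * real m}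
        \<le> exp (- \<eta> * real m * ln (real n / real m) + \<Delta>\<^sub>2 * real m)"
    using \<eta> by (blast intro: always_eventually order_trans[OF prob_sumT_pmf_greater_le_exp])
next
  fix u :: real
  assume "0 < u"
  then show "((\<lambda>\<eta>. \<eta> / (2 * u * u)) \<longlongrightarrow> 0) (at_right 0)"
    using tendsto_divide_zero[OF tendsto_ident_at] by blast
next
  fix u \<eta>1 \<eta>2 :: real
  assume "0 < u" "0 < \<eta>1 \<and> \<eta>1 \<le> \<eta>2 \<and> \<eta>2 < u"
  then show "\<eta>1 / (2 * u * u) \<le> \<eta>2 / (2 * u * u)"
    by (intro divide_right_mono) auto
next
  fix \<eta> u1 u2 :: real
  assume "0 < \<eta>" "\<eta> < u1 \<and> u1 \<le> u2"
  then show "\<eta> / (2 * u2 * u2) \<le> \<eta> / (2 * u1 * u1)"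
    by (intro divide_left_mono mult_mono) auto
qed

end
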